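(* Let $x>3/4$ be a real number. Then there exists $J_0(x)$ such that for every integer $J\geq\max(3,J_0(x))$ and every $(\mathbf{m},\mathbf{n})=(m_1,\dots,m_J,n_1,\dots,n_J)\in[0,x]^{2J}$ satisfying $$\sum_im_i+\sum_jn_j=x,\qquad m_i\leq x/J\ \text{ for all } i,\qquad n_1\geq n_2\geq\cdots\geq n_J,$$ we have $\eta(\mathbf{m},\mathbf{n})\geq\min\bigl(\frac1{24},\frac{4x-3}{24}\bigr)$, where $$\eta(\mathbf{m},\mathbf{n})=\max\Bigl\{\max_\sigma\min\Bigl(\frac14,\frac\sigma2,\frac{x-\sigma}{2}-\frac14\Bigr),\ \frac18-\max\Bigl(0,\frac12\bigl(1-(n_1+n_2)\bigr)\Bigr)\Bigr\},$$ and $\sigma$ ranges over all sub-sums $\sigma=\sum_{i\in\mathcal{I}}m_i+\sum_{j\in\mathcal{J}}n_j$ for $\mathcal{I},\mathcal{J}$ arbitrary subsets of $\{1,\dots,J\}$. *)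

theory Defs
  imports "HOL-Analysis.Analysis"
begin

definition subsums :: "nat \<Rightarrow> (nat \<Rightarrow> real) \<Rightarrow> (nat \<Rightarrow> real) \<Rightarrow> real set" where
  "subsums J m n = {(\<Sum>i\<in>I. m i) + (\<Sum>j\<in>K. n j) | I K. I \<subseteq> {1..J} \<and> K \<subseteq> {1..J}}"

definition eta :: "real \<Rightarrow> nat \<Rightarrow> (nat \<Rightarrow> real) \<Rightarrow> (nat \<Rightarrow> real) \<Rightarrow> real" where
  "eta x J m n = max
     (Max ((\<lambda>\<sigma>. min (1/4) (min (\<sigma>/2) ((x - \<sigma>)/2 - 1/4))) ` subsums J m n))
     (1/8 - max 0 ((1 - (n 1 + n 2)) / 2))"

end

theory Submission
  imports Defs
begin

text \<open>
  Let \<open>c = min (1/24) ((4x-3)/24)\<close>; a sub-sum \<open>\<sigma>\<close> in the window \<open>[2c, x - 1/2 - 2c]\<close> gives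
  \<open>\<eta> \<ge> c\<close>. Adding summands one at a time, starting from 0, lands in the window as soon as
  every summand is at most its width \<open>x - 1/2 - 4c \<ge> x/3\<close> and their total reaches \<open>2c\<close>.
  The width bound holds for all \<open>m\<^sub>i \<le> x/J \<le> x/3\<close> and, by monotonicity, for all \<open>n\<^sub>j\<close> with
  \<open>j \<ge> 3\<close>. If these summands total less than \<open>2c\<close>, then \<open>n\<^sub>1 + n\<^sub>2 > x - 2c \<ge> 3/4 + 4c\<close>
  and the second term of \<open>\<eta>\<close> is at least \<open>c\<close>. So \<open>J\<^sub>0 = 0\<close> already works.
\<close>

lemma subset_sum_in_window:
  fixes f :: "'a \<Rightarrow> real"
  assumes "finite A" "\<forall>a\<in>A. f a \<le> U - L" "B \<le> U" "L \<le> B + sum f A"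
  shows "\<exists>S\<subseteq>A. L \<le> B + sum f S \<and> B + sum f S \<le> U"
  using assms
proof (induction A arbitrary: B rule: finite_induct)
  case empty
  then show ?case by auto
next
  case (insert a A)
  show ?case
  proof (cases "L \<le> B")
    case True
    then show ?thesis using insert.prems by (intro exI[of _ "{}"]) auto
  next
    case False
    then have "B + f a \<le> U" using insert.prems by auto
    moreover have "L \<le> (B + f a) + sum f A" using insert.prems insert.hyps by simp
    ultimately obtain S where S: "S \<subseteq> A" "L \<le> B + f a + sum f S" "B + f a + sum f S \<le> U"
      using insert.IH[of "B + f a"] insert.prems by (auto simp: add.assoc)
    have "sum f (insert a S) = f a + sum f S"
      using S(1) insert.hyps finite_subset[OF S(1)] by (subst sum.insert) auto
    then show ?thesis using S by (intro exI[of _ "insert a S"]) auto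
  qed
qed

lemma subset_sum_in_window_two_families:
  fixes m n :: "'a \<Rightarrow> real"
  assumes "finite A" "finite K"
    and "\<forall>i\<in>A. m i \<le> U - L" "\<forall>j\<in>K. n j \<le> U - L" "0 \<le> U" "L \<le> sum m A + sum n K"
  shows "\<exists>I\<subseteq>A. \<exists>K'\<subseteq>K. L \<le> sum m I + sum n K' \<and> sum m I + sum n K' \<le> U"
proof -
  let ?f = "case_sum m n"
  have "\<forall>a\<in>A <+> K. ?f a \<le> U - L" using assms(3,4) by auto
  moreover have "sum ?f (A <+> K) = sum m A + sum n K" using assms(1,2) by (simp add: sum.Plus comp_def)
  ultimately obtain S where S: "S \<subseteq> A <+> K" "L \<le> sum ?f S" "sum ?f S \<le> U"
    using subset_sum_in_window[of "A <+> K" ?f U L 0] assms by auto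
  have fin: "finite (Inl -` S)" "finite (Inr -` S)"
    using S(1) assms(1,2) by (auto intro: finite_subset)
  have "S = Inl -` S <+> Inr -` S" by (auto simp: Plus_def image_iff) (metis sum.exhaust)
  then have "sum ?f S = sum ?f (Inl -` S <+> Inr -` S)" by (rule arg_cong)
  also have "\<dots> = sum m (Inl -` S) + sum n (Inr -` S)"
    using sum.Plus[OF fin, of ?f] by (simp add: comp_def)
  finally have "sum ?f S = sum m (Inl -` S) + sum n (Inr -` S)" .
  moreover have "Inl -` S \<subseteq> A" "Inr -` S \<subseteq> K" using S(1) by auto
  ultimately show ?thesis using S(2,3) by metis
qed

lemma finite_subsums: "finite (subsums J m n)"
proof -
  have "subsums J m n = (\<lambda>(I, K). sum m I + sum n K) ` (Pow {1..J} \<times> Pow {1..J})"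
    unfolding subsums_def by auto
  then show ?thesis by simp
qed

lemma eta_ge_subsum:
  assumes "\<sigma> \<in> subsums J m n"
  shows "min (1/4) (min (\<sigma>/2) ((x - \<sigma>)/2 - 1/4)) \<le> eta x J m n"
proof -
  have "min (1/4) (min (\<sigma>/2) ((x - \<sigma>)/2 - 1/4))
      \<le> Max ((\<lambda>\<sigma>. min (1/4) (min (\<sigma>/2) ((x - \<sigma>)/2 - 1/4))) ` subsums J m n)"
    using assms finite_subsums by (intro Max_ge) auto
  then show ?thesis unfolding eta_def by linarith
qed

lemma eta_ge_top_pair: "1/8 - max 0 ((1 - (n 1 + n 2)) / 2) \<le> eta x J m n"
  unfolding eta_def by linarith

lemma nonincreasing_tail_le_third:
  fixes m n :: "nat \<Rightarrow> real"
  assumes "\<forall>i\<in>{1..J}. 0 \<le> m i \<and> 0 \<le> n i"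
    and "\<forall>i j. 1 \<le> i \<longrightarrow> i \<le> j \<longrightarrow> j \<le> J \<longrightarrow> n j \<le> n i"
    and j: "j \<in> {3..J}"
  shows "3 * n j \<le> (\<Sum>i=1..J. m i) + (\<Sum>i=1..J. n i)"
proof -
  have "sum n {1, 2, j} \<le> sum n {1..J}" using assms j by (intro sum_mono2) auto
  moreover have "sum n {1, 2, j} = n 1 + n 2 + n j" using j by simp
  moreover have "n j \<le> n 1" "n j \<le> n 2" using assms(2) j by auto
  moreover have "0 \<le> sum m {1..J}" using assms(1) by (intro sum_nonneg) auto
  ultimately show ?thesis by linarith
qed

lemma split_first_two:
  fixes n :: "nat \<Rightarrow> real"
  assumes "J \<ge> 2"
  shows "(\<Sum>j=1..J. n j) = n 1 + n 2 + (\<Sum>j=3..J. n j)"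
proof -
  have "{1..J} = {1, 2} \<union> {3..J}" using assms by auto
  then show ?thesis by (simp add: sum.union_disjoint)
qed

lemma eta_ge:
  fixes x c :: real and m n :: "nat \<Rightarrow> real"
  assumes c: "0 \<le> c" "c \<le> 1/8" "6 * c \<le> x - 3/4" and J: "J \<ge> 3"
    and nonneg: "\<forall>i\<in>{1..J}. 0 \<le> m i \<and> 0 \<le> n i"
    and total: "(\<Sum>i=1..J. m i) + (\<Sum>j=1..J. n j) = x"
    and small: "\<forall>i\<in>{1..J}. m i \<le> x / real J"
    and mono: "\<forall>i j. 1 \<le> i \<longrightarrow> i \<le> j \<longrightarrow> j \<le> J \<longrightarrow> n j \<le> n i"
  shows "c \<le> eta x J m n"
proof -
  define L U where "L = 2 * c" and "U = x - 1/2 - 2 * c"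
  have width: "x / 3 \<le> U - L" using c(3) unfolding L_def U_def by linarith
  have "x / real J \<le> x / 3" using J c by (intro divide_left_mono) auto
  then have m_small: "\<forall>i\<in>{1..J}. m i \<le> U - L" using small width by (meson order_trans)
  have n_small: "\<forall>j\<in>{3..J}. n j \<le> U - L"
    using nonincreasing_tail_le_third[OF nonneg mono] total width by fastforce
  have x_split: "x = n 1 + n 2 + ((\<Sum>i=1..J. m i) + (\<Sum>j=3..J. n j))"
    using total split_first_two[of J n] J by linarith
  show ?thesis
  proof (cases "L \<le> (\<Sum>i=1..J. m i) + (\<Sum>j=3..J. n j)")
    case True
    moreover have "0 \<le> U" using c unfolding U_def by linarith
    ultimately obtain I K where IK: "I \<subseteq> {1..J}" "K \<subseteq> {3..J}"
      "L \<le> sum m I + sum n K" "sum m I + sum n K \<le> U"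
      using subset_sum_in_window_two_families[OF _ _ m_small n_small] by blast
    define \<sigma> where "\<sigma> = sum m I + sum n K"
    have "\<sigma> \<in> subsums J m n"
      unfolding subsums_def \<sigma>_def using IK(1,2) by (intro CollectI exI[of _ I] exI[of _ K]) auto
    moreover have "c \<le> min (1/4) (min (\<sigma>/2) ((x - \<sigma>)/2 - 1/4))"
    proof -
      have "2 * c \<le> \<sigma>" "\<sigma> \<le> x - 1/2 - 2 * c" using IK(3,4) unfolding \<sigma>_def L_def U_def .
      then have "c \<le> \<sigma>/2" "c \<le> (x - \<sigma>)/2 - 1/4" by (simp_all add: field_simps)
      then show ?thesis using c(2) by simp
    qed
    ultimately show ?thesis by (meson eta_ge_subsum order_trans)
  next
    case False
    then have "3/4 + 4 * c \<le> n 1 + n 2" using x_split c(3) unfolding L_def by linarith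
    then have "c \<le> 1/8 - max 0 ((1 - (n 1 + n 2)) / 2)" using c(1,2) by (simp add: max_def field_simps)
    then show ?thesis using eta_ge_top_pair order_trans by blast
  qed
qed

theorem proposition4p4:
  fixes x :: real
  assumes "x > 3/4"
  shows "\<exists>J0::nat. \<forall>J::nat. \<forall>m n :: nat \<Rightarrow> real.
           J \<ge> max 3 J0 \<longrightarrow>
           (\<forall>i\<in>{1..J}. 0 \<le> m i \<and> m i \<le> x \<and> 0 \<le> n i \<and> n i \<le> x) \<longrightarrow>
           (\<Sum>i=1..J. m i) + (\<Sum>j=1..J. n j) = x \<longrightarrow>
           (\<forall>i\<in>{1..J}. m i \<le> x / real J) \<longrightarrow>
           (\<forall>i j. 1 \<le> i \<longrightarrow> i \<le> j \<longrightarrow> j \<le> J \<longrightarrow> n j \<le> n i) \<longrightarrow>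
           eta x J m n \<ge> min (1/24) ((4*x - 3)/24)"
proof (intro exI[of _ 0] allI impI)
  fix J :: nat and m n :: "nat \<Rightarrow> real"
  assume "max 3 0 \<le> J" "\<forall>i\<in>{1..J}. 0 \<le> m i \<and> m i \<le> x \<and> 0 \<le> n i \<and> n i \<le> x"
    "(\<Sum>i=1..J. m i) + (\<Sum>j=1..J. n j) = x" "\<forall>i\<in>{1..J}. m i \<le> x / real J"
    "\<forall>i j. 1 \<le> i \<longrightarrow> i \<le> j \<longrightarrow> j \<le> J \<longrightarrow> n j \<le> n i"
  moreover have "0 \<le> min (1/24) ((4*x - 3)/24)" "6 * min (1/24) ((4*x - 3)/24) \<le> x - 3/4"
    using assms by (auto simp: min_def)
  ultimately show "eta x J m n \<ge> min (1/24) ((4*x - 3)/24)"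
    by (intro eta_ge) auto
qed

end
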